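(* Let $\mathbf{X}$ be a Banach space, $\mathcal{S}\subset\mathbf{X}$, and let $\mathbb{P}$ be a Borel probability measure on $\mathcal{S}$ of logarithmic growth order $s_0\ge0$ with respect to $\mathbf{X}$. Let $s>s_0$ and let $c=c(s)>0$, $\varepsilon_0=\varepsilon_0(s)>0$ be such that $\mathbb{P}(\mathcal{S}\cap\mathcal{B}(\mathbf{x},\varepsilon;\mathbf{X}))\le2^{-c\varepsilon^{-1/s}}$ for all $\mathbf{x}\in\mathbf{X}$, $\varepsilon\in(0,\varepsilon_0)$. Then for any $R\in\mathbb{N}$ and any encoder/decoder pair $(E_R,D_R)$ of code-length $R$, \[\mathbb{P}^\ast(\{\mathbf{x}\in\mathcal{S}:\|\mathbf{x}-D_R(E_R(\mathbf{x}))\|_{\mathbf{X}}\le\varepsilon\})\le2^{R-c\varepsilon^{-1/s}}\qquad\forall\varepsilon\in(0,\varepsilon_0).\] Furthermore, for any $s>s_0$ and $K>0$ there exists $R_0=R_0(s,s_0,K,\mathbb{P},\mathcal{S},\mathbf{X})\in\mathbb{N}$ such that for every codec $\mathcal{C}=((E_R,D_R))_{R\in\mathbb{N}}$, \[\mathbb{P}^\ast(\{\mathbf{x}\in\mathcal{S}:\|\mathbf{x}-D_R(E_R(\mathbf{x}))\|_{\mathbf{X}}\le K\cdot R^{-s}\})\le2^{-R}\qquad\forall R\ge R_0.\]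
   Context: Let $(\mathbf{X},\|\cdot\|_{\mathbf{X}})$ be a real Banach space and $\mathcal{S}\subset\mathbf{X}$. An encoder/decoder pair of code-length $R$ is a pair of maps $E_R:\mathcal{S}\to\{0,1\}^R$, $D_R:\{0,1\}^R\to\mathbf{X}$; a codec is a sequence $((E_R,D_R))_{R\in\mathbb{N}}$ of such pairs. $\mathcal{S}$ carries the trace $\sigma$-algebra of the Borel $\sigma$-algebra of $\mathbf{X}$; $\mathbb{P}^\ast(M)=\inf\{\sum_n\mathbb{P}(M_n):M_n\text{ measurable},M\subset\bigcup_nM_n\}$ is the outer measure. $\mathcal{B}(\mathbf{x},\varepsilon;\mathbf{X})$ is the closed ball. $\mathbb{P}$ has (logarithmic) growth order $s_0\in[0,\infty)$ w.r.t. $\mathbf{X}$ if for every $s>s_0$ there exist $\varepsilon_0,c>0$ with $\mathbb{P}(\mathcal{S}\cap\mathcal{B}(\mathbf{x},\varepsilon;\mathbf{X}))\le2^{-c\varepsilon^{-1/s}}$ for all $\mathbf{x}\in\mathbf{X}$, $\varepsilon\in(0,\varepsilon_0)$. *)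

theory Defs
  imports "HOL-Probability.Probability"
begin

definition outer_prob :: "'a measure \<Rightarrow> 'a set \<Rightarrow> ennreal" where
  "outer_prob M A = (INF B \<in> {B :: nat \<Rightarrow> 'a set. range B \<subseteq> sets M \<and> A \<subseteq> (\<Union>n. B n)}.
                        (\<Sum>n. emeasure M (B n)))"

definition borel_prob_on :: "'a::topological_space set \<Rightarrow> 'a measure \<Rightarrow> bool" where
  "borel_prob_on S M \<longleftrightarrow> prob_space M \<and> sets M = sets (restrict_space borel S)"

definition growth_order :: "'a::real_normed_vector set \<Rightarrow> 'a measure \<Rightarrow> real \<Rightarrow> bool" where
  "growth_order S M s0 \<longleftrightarrow> s0 \<ge> 0 \<and>
     (\<forall>s > s0. \<exists>eps0 > 0. \<exists>c > 0. \<forall>x eps. 0 < eps \<and> eps < eps0 \<longrightarrow>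
        measure M (S \<inter> cball x eps) \<le> 2 powr (- c * eps powr (-1 / s)))"

definition enc_dec_pair :: "'a set \<Rightarrow> nat \<Rightarrow> ('a \<Rightarrow> bool list) \<Rightarrow> (bool list \<Rightarrow> 'a) \<Rightarrow> bool" where
  "enc_dec_pair S R E D \<longleftrightarrow> (\<forall>x\<in>S. length (E x) = R)"

definition codec :: "'a set \<Rightarrow> (nat \<Rightarrow> 'a \<Rightarrow> bool list) \<Rightarrow> (nat \<Rightarrow> bool list \<Rightarrow> 'a) \<Rightarrow> bool" where
  "codec S E D \<longleftrightarrow> (\<forall>R. enc_dec_pair S R (E R) (D R))"

end

theory Submission
  imports Defs "HOL-Real_Asymp.Real_Asymp"
begin

text \<open>
  An encoder of code-length \<open>R\<close> takes at most \<open>2^R\<close> values, so the points that the codec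
  reconstructs within \<open>\<epsilon>\<close> lie in at most \<open>2^R\<close> balls of radius \<open>\<epsilon>\<close> centred at decoded
  codewords. Subadditivity of the outer measure and the small-ball bound give the first
  estimate. For the second, given \<open>s' > s0\<close> pick \<open>s0 < t < s'\<close> and apply the first estimate with
  exponent \<open>t\<close> and \<open>\<epsilon> = K R^(-s')\<close>: then \<open>c \<epsilon>^(-1/t) = c K^(-1/t) R^(s'/t)\<close> grows faster than
  \<open>2R\<close> because \<open>s'/t > 1\<close>, so \<open>R - c \<epsilon>^(-1/t) \<le> -R\<close> for all large \<open>R\<close>.
\<close>

lemma outer_prob_le_finite_cover:
  assumes "finite I" and "C ` I \<subseteq> sets M" and "A \<subseteq> (\<Union>i\<in>I. C i)"
  shows "outer_prob M A \<le> (\<Sum>i\<in>I. emeasure M (C i))"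
proof -
  obtain f where f: "bij_betw f {..<card I} I"
    using ex_bij_betw_nat_finite[OF \<open>finite I\<close>] by (auto simp: atLeast0LessThan)
  define B where "B n = (if n < card I then C (f n) else {})" for n
  have "range B \<subseteq> sets M"
    using assms(2) bij_betwE[OF f] by (auto simp: B_def)
  moreover have "A \<subseteq> (\<Union>n. B n)"
  proof
    fix x assume "x \<in> A"
    then obtain i where "i \<in> I" "x \<in> C i" using assms(3) by blast
    then obtain n where "n < card I" "f n = i" using bij_betw_imp_surj_on[OF f] by force
    with \<open>x \<in> C i\<close> show "x \<in> (\<Union>n. B n)" by (auto simp: B_def)
  qed
  ultimately have "outer_prob M A \<le> (\<Sum>n. emeasure M (B n))"
    unfolding outer_prob_def by (intro INF_lower) auto
  also have "\<dots> = (\<Sum>n<card I. emeasure M (C (f n)))"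
    by (subst suminf_finite[of "{..<card I}"]) (auto simp: B_def)
  also have "\<dots> = (\<Sum>i\<in>I. emeasure M (C i))"
    using sum.reindex_bij_betw[OF f] by simp
  finally show ?thesis .
qed

lemma card_bool_lists_length: "card {w :: bool list. length w = n} = 2 ^ n"
  using card_lists_length_eq[of "UNIV :: bool set" n] by simp

lemma outer_prob_reconstruction_le_pow2_mult:
  fixes S :: "'a::real_normed_vector set"
  assumes "borel_prob_on S M" and "enc_dec_pair S R E D"
    and ball_bound: "\<forall>y. measure M (S \<inter> cball y eps) \<le> b"
  shows "outer_prob M {x\<in>S. norm (x - D (E x)) \<le> eps} \<le> ennreal (2 ^ R * b)"
proof -
  interpret prob_space M
    using assms(1) by (simp add: borel_prob_on_def)
  define W where "W = {w :: bool list. length w = R}"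
  have "finite W"
    unfolding W_def using finite_lists_length_eq[of "UNIV :: bool set" R] by simp
  have ball_sets: "S \<inter> cball y eps \<in> sets M" for y
    using assms(1) by (auto simp: borel_prob_on_def sets_restrict_space)
  have cover: "{x\<in>S. norm (x - D (E x)) \<le> eps} \<subseteq> (\<Union>w\<in>W. S \<inter> cball (D w) eps)"
    using assms(2) by (auto simp: enc_dec_pair_def W_def dist_norm norm_minus_commute)
  have "outer_prob M {x\<in>S. norm (x - D (E x)) \<le> eps} \<le> (\<Sum>w\<in>W. emeasure M (S \<inter> cball (D w) eps))"
    using outer_prob_le_finite_cover[OF \<open>finite W\<close> _ cover] ball_sets by blast
  also have "\<dots> \<le> (\<Sum>w\<in>W. ennreal b)"
    using ball_bound by (intro sum_mono) (simp add: emeasure_eq_measure ennreal_leI)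
  also have "\<dots> = 2 ^ R * ennreal b"
    using card_bool_lists_length[of R] by (simp add: W_def)
  also have "\<dots> = ennreal (2 ^ R * b)"
    using ball_bound measure_nonneg[of M "S \<inter> cball 0 eps"] ennreal_power[of 2 R]
    by (simp add: ennreal_mult')
  finally show ?thesis .
qed

lemma outer_prob_reconstruction_le:
  fixes S :: "'a::real_normed_vector set"
  assumes "borel_prob_on S M" and "enc_dec_pair S R E D"
    and "\<forall>x eps. 0 < eps \<and> eps < eps0 \<longrightarrow>
           measure M (S \<inter> cball x eps) \<le> 2 powr (- c * eps powr (-1 / s))"
    and "0 < eps" and "eps < eps0"
  shows "outer_prob M {x\<in>S. norm (x - D (E x)) \<le> eps}
           \<le> ennreal (2 powr (real R - c * eps powr (-1 / s)))"
proof -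
  have pow: "(2::real) ^ R * 2 powr (- c * eps powr (-1 / s)) = 2 powr (real R - c * eps powr (-1 / s))"
    by (simp add: powr_diff powr_realpow[symmetric] powr_minus_divide divide_inverse)
  have "\<forall>y. measure M (S \<inter> cball y eps) \<le> 2 powr (- c * eps powr (-1 / s))"
    using assms(3-5) by blast
  from outer_prob_reconstruction_le_pow2_mult[OF assms(1,2) this] show ?thesis
    unfolding pow .
qed

lemma eventually_linear_le_powr:
  fixes C p :: real
  assumes "C > 0" and "p > 1"
  shows "eventually (\<lambda>R::nat. 2 * real R \<le> C * real R powr p) at_top"
  using assms by real_asymp

lemma eventually_powr_neg_less:
  fixes K s e :: real
  assumes "K > 0" and "s > 0" and "e > 0"
  shows "eventually (\<lambda>R::nat. K * real R powr (- s) < e) at_top"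
  using assms by real_asymp

lemma outer_prob_reconstruction_rate_le:
  fixes S :: "'a::real_normed_vector set"
  assumes "borel_prob_on S M"
    and small_balls: "\<forall>x eps. 0 < eps \<and> eps < eps0 \<longrightarrow>
           measure M (S \<inter> cball x eps) \<le> 2 powr (- c * eps powr (-1 / t))"
    and "c > 0" and "eps0 > 0" and "0 < t" and "t < s" and "K > 0"
  shows "\<exists>R0::nat. \<forall>E D. codec S E D \<longrightarrow>
           (\<forall>R \<ge> R0. outer_prob M {x\<in>S. norm (x - D R (E R x)) \<le> K * real R powr (- s)}
              \<le> ennreal (2 powr (- real R)))"
proof -
  have "eventually (\<lambda>R::nat. R \<ge> 1 \<and> K * real R powr (- s) < eps0 \<and>
          2 * real R \<le> c * K powr (-1 / t) * real R powr (s / t)) at_top"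
    using eventually_ge_at_top[of 1] eventually_powr_neg_less[of K s eps0]
      eventually_linear_le_powr[of "c * K powr (-1 / t)" "s / t"] assms(3-7)
    by (auto intro: eventually_conj)
  then obtain R0 :: nat where R0: "\<And>R. R \<ge> R0 \<Longrightarrow> R \<ge> 1 \<and> K * real R powr (- s) < eps0 \<and>
          2 * real R \<le> c * K powr (-1 / t) * real R powr (s / t)"
    unfolding eventually_at_top_linorder by blast
  have "outer_prob M {x\<in>S. norm (x - D R (E R x)) \<le> K * real R powr (- s)}
          \<le> ennreal (2 powr (- real R))" if "codec S E D" and "R \<ge> R0" for E D R
  proof -
    define eps where "eps = K * real R powr (- s)"
    have "R \<ge> 1" and "eps < eps0"
      and fast: "2 * real R \<le> c * K powr (-1 / t) * real R powr (s / t)"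
      using R0[OF \<open>R \<ge> R0\<close>] by (auto simp: eps_def)
    then have "eps > 0" using \<open>K > 0\<close> by (simp add: eps_def)
    have "eps powr (-1 / t) = K powr (-1 / t) * real R powr (s / t)"
      using \<open>K > 0\<close> by (simp add: eps_def powr_mult powr_powr)
    then have "2 powr (real R - c * eps powr (-1 / t)) \<le> 2 powr (- real R)"
      using fast by (intro powr_mono) (auto simp: algebra_simps)
    moreover have "enc_dec_pair S R (E R) (D R)"
      using \<open>codec S E D\<close> by (simp add: codec_def)
    ultimately show ?thesis
      using outer_prob_reconstruction_le[OF assms(1) _ small_balls \<open>eps > 0\<close> \<open>eps < eps0\<close>]
      unfolding eps_def by (meson ennreal_leI order_trans)
  qed
  then show ?thesis by blast
qed

theorem lemma2p3:
  fixes S :: "'a::banach set" and M :: "'a measure"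
    and s0 s c eps0 :: real
  assumes "borel_prob_on S M"
    and "growth_order S M s0"
    and "s > s0" and "c > 0" and "eps0 > 0"
    and "\<forall>x eps. 0 < eps \<and> eps < eps0 \<longrightarrow>
           measure M (S \<inter> cball x eps) \<le> 2 powr (- c * eps powr (-1 / s))"
  shows "(\<forall>R E D. enc_dec_pair S R E D \<longrightarrow>
            (\<forall>eps. 0 < eps \<and> eps < eps0 \<longrightarrow>
               outer_prob M {x\<in>S. norm (x - D (E x)) \<le> eps}
                 \<le> ennreal (2 powr (real R - c * eps powr (-1 / s)))))
       \<and> (\<forall>s'. s' > s0 \<longrightarrow> (\<forall>K > 0. \<exists>R0::nat. \<forall>E D. codec S E D \<longrightarrow>
            (\<forall>R \<ge> R0. outer_prob M {x\<in>S. norm (x - D R (E R x)) \<le> K * real R powr (- s')}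
                 \<le> ennreal (2 powr (- real R)))))"
proof (intro conjI allI impI)
  fix R E D eps
  assume "enc_dec_pair S R E D" and "0 < eps \<and> eps < eps0"
  then show "outer_prob M {x\<in>S. norm (x - D (E x)) \<le> eps}
               \<le> ennreal (2 powr (real R - c * eps powr (-1 / s)))"
    using outer_prob_reconstruction_le[OF assms(1) _ assms(6)] by blast
next
  fix s' K :: real
  assume "s' > s0" and "K > 0"
  define t where "t = (s0 + s') / 2"
  have "s0 \<ge> 0" using assms(2) by (simp add: growth_order_def)
  then have "s0 < t" "0 < t" "t < s'" using \<open>s' > s0\<close> by (auto simp: t_def)
  then obtain e0 c' where "e0 > 0" "c' > 0" and "\<forall>x eps. 0 < eps \<and> eps < e0 \<longrightarrow>
      measure M (S \<inter> cball x eps) \<le> 2 powr (- c' * eps powr (-1 / t))"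
    using assms(2) unfolding growth_order_def by blast
  then show "\<exists>R0::nat. \<forall>E D. codec S E D \<longrightarrow>
      (\<forall>R \<ge> R0. outer_prob M {x\<in>S. norm (x - D R (E R x)) \<le> K * real R powr (- s')}
         \<le> ennreal (2 powr (- real R)))"
    using outer_prob_reconstruction_rate_le[OF assms(1)] \<open>0 < t\<close> \<open>t < s'\<close> \<open>K > 0\<close> by blast
qed

end
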